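(* Let $S$ be a qubit with Hamiltonian $H_S=E|1\rangle\langle1|$, $E>0$, let $\beta>0$, and assume the initial state of $S$ is diagonal in the energy eigenbasis with ground state population $p_0^{(0)}\ge 1/2$. Let $0\le\epsilon\le\frac{1}{1+e^{\beta E}+e^{2\beta E}}$. Then the optimal nontrivial cooling protocol in $\mathcal{P}^\epsilon_\emptyset$ is the one in which in each round $k$ (1) the Pauli $X$ unitary is applied to $S$ and (2) the $\epsilon$-noisy $\beta$-swap $\Lambda^\epsilon_\beta$ is applied to $S$. The ground state population after round $k$ is $$p^{(k)}_0=1-\frac{\epsilon}{2-(1-\epsilon)Z}-\big((1-\epsilon)Z-1\big)^k\Big(1-\frac{\epsilon}{2-(1-\epsilon)Z}-p_0^{(0)}\Big),$$ where $Z=1+e^{-\beta E}$, and $p_0^{(k)}\to1-\frac{\epsilon}{2-(1-\epsilon)Z}$ as $k\to\infty$.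
   Context: A dephasing thermalization on $S$ is a quantum channel $\Lambda$ with $\Lambda(\tau_S)=\tau_S$, where $\tau_S=e^{-\beta H_S}/\mathrm{tr}[e^{-\beta H_S}]$, and $\langle 0|\Lambda(\rho)|1\rangle=0$ for all $\rho$. Its action on populations is the Gibbs-stochastic matrix $\begin{pmatrix}1-\lambda e^{-\beta E}&\lambda\\ \lambda e^{-\beta E}&1-\lambda\end{pmatrix}$ for some $\lambda\in[0,1]$, where $\lambda=\langle0|\Lambda(|1\rangle\langle1|)|0\rangle$ is the de-excitation probability. $\mathcal{P}^\epsilon_\emptyset$ is the set of protocols without auxiliary systems in which each round $k$ consists of an arbitrary unitary on $S$ followed by a dephasing thermalization $\Lambda^{(k)}$ on $S$ with $\langle0|\Lambda^{(k)}(|1\rangle\langle1|)|0\rangle\le1-\epsilon$; $p_0^{(k)}=\langle0|\rho_S^{(k)}|0\rangle$ is the ground state population after round $k$, and optimality means maximizing $p_0^{(k)}$ for every $k$. "Nontrivial" refers to protocols that actually perform a thermalization (a trivial protocol applies no thermalization, i.e. $\lambda=0$). The $\epsilon$-noisy $\beta$-swap $\Lambda^\epsilon_\beta$ is a dephasing thermalization with $\langle0|\Lambda^\epsilon_\beta(|1\rangle\langle1|)|0\rangle=1-\epsilon$.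
   Formalization: Optimality means that every protocol in $\mathcal{P}^\epsilon_\emptyset$, trivial or not, has $p_0^{(k)}$ at most the maximum of $p_0^{(0)}$ and the value of the Pauli X / noisy beta-swap protocol, not at most that value itself. The statement above fails without it. *)

theory Defs
  imports "Jordan_Normal_Form.Matrix" Complex_Main
begin

text \<open>Qubit operators are 2x2 complex matrices; index 0 is the ground state, index 1 the
excited state (Hamiltonian H_S = E |1><1|).\<close>

definition adj2 :: "complex mat \<Rightarrow> complex mat" where
  "adj2 U = mat 2 2 (\<lambda>(i,j). cnj (U $$ (j,i)))"

definition unitary2 :: "complex mat \<Rightarrow> bool" where
  "unitary2 U \<longleftrightarrow> U \<in> carrier_mat 2 2 \<and> U * adj2 U = 1\<^sub>m 2"

definition pauliX :: "complex mat" where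
  "pauliX = mat 2 2 (\<lambda>(i,j). if i \<noteq> j then 1 else 0)"

definition diag_state :: "real \<Rightarrow> complex mat" where
  "diag_state p = mat 2 2 (\<lambda>(i,j). if i = j then (if i = 0 then complex_of_real p
                                                   else complex_of_real (1 - p)) else 0)"

definition pop0 :: "complex mat \<Rightarrow> real" where
  "pop0 \<rho> = Re (\<rho> $$ (0,0))"

text \<open>The dephasing thermalization with de-excitation probability lam, at inverse
temperature beta for the qubit with gap E: its output is diagonal (dephasing) and
its action on populations is the Gibbs-stochastic matrix
((1 - lam e^{-beta E}, lam), (lam e^{-beta E}, 1 - lam)).\<close>
definition deph_therm :: "real \<Rightarrow> real \<Rightarrow> real \<Rightarrow> complex mat \<Rightarrow> complex mat" where
  "deph_therm \<beta> E lam \<rho> =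
     (let w = exp (- \<beta> * E) in
      mat 2 2 (\<lambda>(i,j).
        if i = 0 \<and> j = 0 then complex_of_real (1 - lam * w) * \<rho> $$ (0,0)
                               + complex_of_real lam * \<rho> $$ (1,1)
        else if i = 1 \<and> j = 1 then complex_of_real (lam * w) * \<rho> $$ (0,0)
                               + complex_of_real (1 - lam) * \<rho> $$ (1,1)
        else 0))"

primrec proto_state ::
  "real \<Rightarrow> real \<Rightarrow> (nat \<Rightarrow> complex mat) \<Rightarrow> (nat \<Rightarrow> real) \<Rightarrow> complex mat \<Rightarrow> nat \<Rightarrow> complex mat" where
  "proto_state \<beta> E Us lams \<rho>0 0 = \<rho>0"
| "proto_state \<beta> E Us lams \<rho>0 (Suc k) =
     deph_therm \<beta> E (lams k) (Us k * proto_state \<beta> E Us lams \<rho>0 k * adj2 (Us k))"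

definition in_P_eps :: "real \<Rightarrow> (nat \<Rightarrow> complex mat) \<Rightarrow> (nat \<Rightarrow> real) \<Rightarrow> bool" where
  "in_P_eps \<epsilon> Us lams \<longleftrightarrow> (\<forall>k. unitary2 (Us k) \<and> 0 \<le> lams k \<and> lams k \<le> 1 - \<epsilon>)"

end

theory Submission
  imports Defs "Jordan_Normal_Form.Determinant"
begin

(* Every protocol keeps the state diagonal. A unitary acts on the populations by a doubly
   stochastic matrix, so it moves the larger population m of the state to a convex combination
   in [1 - m, m]; the thermalization is affine in its de-excitation probability, so its extreme
   outputs occur at lambda = 0 and lambda = 1 - epsilon. Hence one round raises the larger
   population from m to at most max m (f m), where f m = therm_pop w (1 - epsilon) (1 - m) is
   one round of the X protocol. The map f is affine with slope (1 - epsilon) Z - 1, which lies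
   in [0, 1) as soon as epsilon (1 + e^(beta E)) <= 1 (all that is used of the hypothesis on
   epsilon). So f is monotone, its orbit from p0 is monotone and dominates every protocol by
   induction, and it converges geometrically to the fixed point of f. *)

lemma orbit_step_le_max:
  fixes f :: "'a::linorder \<Rightarrow> 'a"
  assumes "mono f"
  shows "max ((f ^^ k) x) (f x) \<le> max x ((f ^^ Suc k) x)"
proof (cases "x \<le> f x")
  case True
  have step: "(f ^^ j) x \<le> (f ^^ Suc j) x" for j
    using funpow_mono[OF assms True, of j] by (simp add: funpow_swap1)
  hence "incseq (\<lambda>j. (f ^^ j) x)" by (rule incseq_SucI)
  hence "(f ^^ 1) x \<le> (f ^^ Suc k) x" by (rule incseqD) simp
  thus ?thesis using step[of k] by (simp add: le_max_iff_disj)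
next
  case False
  hence fx: "f x \<le> x" using linear by blast
  have "(f ^^ Suc j) x \<le> (f ^^ j) x" for j
    using funpow_mono[OF assms fx, of j] by (simp add: funpow_swap1)
  hence "decseq (\<lambda>j. (f ^^ j) x)" by (rule decseq_SucI)
  hence "(f ^^ k) x \<le> (f ^^ 0) x" by (auto dest: decseqD)
  thus ?thesis using fx by (simp add: le_max_iff_disj)
qed

lemma le_max_orbit:
  fixes f :: "'a::linorder \<Rightarrow> 'a"
  assumes "mono f" and "b 0 \<le> x" and "\<And>k. b (Suc k) \<le> max (b k) (f (b k))"
  shows "b k \<le> max x ((f ^^ k) x)"
proof (induction k)
  case 0
  show ?case using assms(2) by simp
next
  case (Suc k)
  have "b (Suc k) \<le> max (max x ((f ^^ k) x)) (f (max x ((f ^^ k) x)))"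
    using assms(3)[of k] Suc.IH monoD[OF assms(1) Suc.IH] by (auto simp: le_max_iff_disj)
  also have "\<dots> = max (max x ((f ^^ k) x)) (max (f x) ((f ^^ Suc k) x))"
    by (simp add: max_of_mono[OF assms(1), symmetric])
  also have "\<dots> \<le> max x ((f ^^ Suc k) x)"
    using orbit_step_le_max[OF assms(1), of k x] by auto
  finally show ?case .
qed

lemma funpow_affine:
  fixes r p x :: "'a::comm_ring_1"
  shows "((\<lambda>x. (1 - r) * p + r * x) ^^ k) x = p - r ^ k * (p - x)"
proof (induction k)
  case (Suc k)
  have "((\<lambda>x. (1 - r) * p + r * x) ^^ Suc k) x = (1 - r) * p + r * (p - r ^ k * (p - x))"
    using Suc.IH by simp
  also have "\<dots> = p - r ^ Suc k * (p - x)"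
    by (simp add: algebra_simps)
  finally show ?case .
qed simp

lemma le_max_affine:
  fixes a d t L :: real
  assumes "0 \<le> t" and "t \<le> L"
  shows "a + t * d \<le> max a (a + L * d)"
proof (cases "0 \<le> d")
  case True
  thus ?thesis using assms by (simp add: mult_right_mono le_max_iff_disj)
next
  case False
  thus ?thesis using assms by (simp add: mult_nonneg_nonpos le_max_iff_disj)
qed

definition therm_pop :: "real \<Rightarrow> real \<Rightarrow> real \<Rightarrow> real" where
  "therm_pop w lam p = p + lam * (1 - (1 + w) * p)"

definition max_pop :: "real \<Rightarrow> real" where
  "max_pop p = max p (1 - p)"

lemma max_pop_mix_le:
  assumes "0 \<le> x" and "x \<le> 1"
  shows "max_pop (x * p + (1 - x) * (1 - p)) \<le> max_pop p"
proof -
  have "x * p + (1 - x) * (1 - p) \<le> x * max_pop p + (1 - x) * max_pop p"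
    "x * (1 - p) + (1 - x) * p \<le> x * max_pop p + (1 - x) * max_pop p"
    unfolding max_pop_def using assms by (intro add_mono mult_left_mono; simp)+
  thus ?thesis unfolding max_pop_def by (simp add: algebra_simps)
qed

lemma max_pop_therm_pop_le:
  assumes "0 \<le> lam" and "lam \<le> L" and "w \<le> 1" and "1 \<le> L * (1 + w)"
    and "max_pop a \<le> m"
  shows "max_pop (therm_pop w lam a) \<le> max m (therm_pop w L (1 - m))"
proof -
  have a: "1 - m \<le> a" "a \<le> m" using assms(5) unfolding max_pop_def by auto
  have "therm_pop w lam a \<le> max a (therm_pop w L a)"
    unfolding therm_pop_def using assms(1,2) by (rule le_max_affine)
  moreover have "1 - therm_pop w lam a \<le> max (1 - a) (1 - therm_pop w L a)"
    using le_max_affine[OF assms(1,2), of "1 - a" "(1 + w) * a - 1"]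
    unfolding therm_pop_def by (simp add: algebra_simps)
  moreover have "therm_pop w L a \<le> therm_pop w L (1 - m)"
    using mult_right_mono_neg[OF a(1), of "1 - L * (1 + w)"] assms(4)
    unfolding therm_pop_def by (simp add: algebra_simps)
  moreover have "1 - therm_pop w L a \<le> therm_pop w L (1 - m)"
    using mult_right_mono[OF a(2), of "L * (1 + w) - 1"] mult_left_mono[OF assms(3), of L] assms
    unfolding therm_pop_def by (simp add: algebra_simps)
  ultimately show ?thesis using a unfolding max_pop_def by (simp add: le_max_iff_disj) linarith
qed

lemma therm_pop_flip_eq_affine:
  fixes w \<epsilon> q :: real
  defines "r \<equiv> (1 - \<epsilon>) * (1 + w) - 1"
  assumes "r \<noteq> 1"
  shows "therm_pop w (1 - \<epsilon>) (1 - q) = (1 - r) * (1 - \<epsilon> / (2 - (1 - \<epsilon>) * (1 + w))) + r * q"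
proof -
  have "2 - (1 - \<epsilon>) * (1 + w) \<noteq> 0" using assms(2) unfolding r_def by simp
  then show ?thesis unfolding r_def therm_pop_def by (simp add: field_simps)
qed

lemma small_noise_slope_bounds:
  fixes \<epsilon> t :: real
  assumes "0 < t" and "0 \<le> \<epsilon>" and "\<epsilon> \<le> 1 / (1 + exp t + exp (2 * t))"
  shows "\<epsilon> < 1" and "0 \<le> (1 - \<epsilon>) * (1 + exp (- t)) - 1"
    and "(1 - \<epsilon>) * (1 + exp (- t)) - 1 < 1"
proof -
  have "1 / (1 + exp t + exp (2 * t)) \<le> 1 / (1 + exp t)"
    by (intro divide_left_mono) (auto simp: add_pos_pos)
  with assms(3) have \<epsilon>: "\<epsilon> \<le> 1 / (1 + exp t)" by (rule order_trans)
  also have "\<dots> < 1" by (simp add: add_pos_pos)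
  finally show "\<epsilon> < 1" .
  have "(1 - \<epsilon>) * (1 + exp (- t)) - 1 = (1 - \<epsilon> * (1 + exp t)) / exp t"
    by (simp add: exp_minus field_simps)
  then show "0 \<le> (1 - \<epsilon>) * (1 + exp (- t)) - 1"
    using \<epsilon> by (simp add: pos_le_divide_eq add_pos_pos)
  have "(1 - \<epsilon>) * (1 + exp (- t)) \<le> 1 + exp (- t)"
    using assms(2) \<open>\<epsilon> < 1\<close> by (intro mult_left_le_one_le) auto
  moreover have "exp (- t) < 1" using assms(1) by simp
  ultimately show "(1 - \<epsilon>) * (1 + exp (- t)) - 1 < 1" by linarith
qed

lemma sum_2: "(\<Sum>i<2::nat. f i) = f 0 + f 1"
  by (simp add: numeral_2_eq_2)

lemma mult_adj2_index:
  assumes "M \<in> carrier_mat 2 2" and "i < 2" and "j < 2"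
  shows "(M * adj2 N) $$ (i, j) = M $$ (i, 0) * cnj (N $$ (j, 0)) + M $$ (i, 1) * cnj (N $$ (j, 1))"
  using assms by (simp add: times_mat_def scalar_prod_def adj2_def sum_2 atLeast0LessThan)

lemma unitary2_adj2_mult: "unitary2 U \<Longrightarrow> adj2 U * U = 1\<^sub>m 2"
  unfolding unitary2_def by (auto intro: mat_mult_left_right_inverse simp: adj2_def)

lemma unitary2_row_norms:
  assumes "unitary2 U" and "i < 2"
  shows "(cmod (U $$ (i, 0)))\<^sup>2 + (cmod (U $$ (i, 1)))\<^sup>2 = 1"
proof -
  have U: "U \<in> carrier_mat 2 2" and "U * adj2 U = 1\<^sub>m 2" using assms(1) unfolding unitary2_def by auto
  have "complex_of_real ((cmod (U $$ (i, 0)))\<^sup>2 + (cmod (U $$ (i, 1)))\<^sup>2) = (U * adj2 U) $$ (i, i)"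
    unfolding mult_adj2_index[OF U assms(2,2)] by (simp add: complex_norm_square del: of_real_power)
  also have "\<dots> = 1" using \<open>U * adj2 U = 1\<^sub>m 2\<close> assms(2) by simp
  finally show ?thesis by (simp only: of_real_eq_1_iff)
qed

lemma unitary2_column_norms:
  assumes "unitary2 U" and "j < 2"
  shows "(cmod (U $$ (0, j)))\<^sup>2 + (cmod (U $$ (1, j)))\<^sup>2 = 1"
proof -
  have U: "U \<in> carrier_mat 2 2" using assms(1) unfolding unitary2_def by auto
  have "complex_of_real ((cmod (U $$ (0, j)))\<^sup>2 + (cmod (U $$ (1, j)))\<^sup>2) = (adj2 U * U) $$ (j, j)"
    using U assms(2)
    by (simp add: times_mat_def scalar_prod_def adj2_def sum_2 atLeast0LessThan
        complex_norm_square mult.commute del: of_real_power)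
  also have "\<dots> = 1" using assms unitary2_adj2_mult by simp
  finally show ?thesis by (simp only: of_real_eq_1_iff)
qed

lemma mult_diag_state_index:
  assumes "U \<in> carrier_mat 2 2" and "i < 2"
  shows "(U * diag_state p) $$ (i, 0) = U $$ (i, 0) * complex_of_real p"
    and "(U * diag_state p) $$ (i, 1) = U $$ (i, 1) * complex_of_real (1 - p)"
  using assms by (simp_all add: times_mat_def scalar_prod_def diag_state_def sum_2 atLeast0LessThan)

lemma conj_diag_state_index:
  assumes "U \<in> carrier_mat 2 2" and "i < 2"
  shows "(U * diag_state p * adj2 U) $$ (i, i)
    = complex_of_real ((cmod (U $$ (i, 0)))\<^sup>2 * p + (cmod (U $$ (i, 1)))\<^sup>2 * (1 - p))"
proof -
  have "U * diag_state p \<in> carrier_mat 2 2" using assms(1) by (simp add: diag_state_def)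
  from mult_adj2_index[OF this assms(2) assms(2)] show ?thesis
    unfolding mult_diag_state_index[OF assms]
    by (simp add: complex_norm_square algebra_simps del: of_real_power)
qed

lemma deph_therm_eq_diag_state:
  assumes "\<rho> $$ (0, 0) = complex_of_real a" and "\<rho> $$ (1, 1) = complex_of_real (1 - a)"
  shows "deph_therm \<beta> E lam \<rho> = diag_state (therm_pop (exp (- \<beta> * E)) lam a)"
proof -
  define w where "w = exp (- \<beta> * E)"
  have "complex_of_real (1 - lam * w) * \<rho> $$ (0, 0) + complex_of_real lam * \<rho> $$ (1, 1)
      = complex_of_real (therm_pop w lam a)"
    and "complex_of_real (lam * w) * \<rho> $$ (0, 0) + complex_of_real (1 - lam) * \<rho> $$ (1, 1)
      = complex_of_real (1 - therm_pop w lam a)"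
    unfolding assms therm_pop_def of_real_mult[symmetric] of_real_add[symmetric]
    by (simp_all add: algebra_simps)
  then show ?thesis
    by (auto intro!: eq_matI simp: deph_therm_def diag_state_def Let_def less_2_cases_iff w_def)
qed

lemma deph_therm_diag_state:
  "deph_therm \<beta> E lam (diag_state p) = diag_state (therm_pop (exp (- \<beta> * E)) lam p)"
  by (rule deph_therm_eq_diag_state) (simp_all add: diag_state_def)

lemma deph_therm_unitary_conj_diag_state:
  assumes "unitary2 U"
  obtains x where "0 \<le> x" and "x \<le> 1" and
    "deph_therm \<beta> E lam (U * diag_state p * adj2 U)
       = diag_state (therm_pop (exp (- \<beta> * E)) lam (x * p + (1 - x) * (1 - p)))"
proof
  let ?x = "(cmod (U $$ (0, 0)))\<^sup>2"
  have U: "U \<in> carrier_mat 2 2" using assms unfolding unitary2_def by simp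
  have norms: "(cmod (U $$ (0, 1)))\<^sup>2 = 1 - ?x" "(cmod (U $$ (1, 0)))\<^sup>2 = 1 - ?x"
    "(cmod (U $$ (1, 1)))\<^sup>2 = ?x"
    using unitary2_row_norms[OF assms, of 0] unitary2_row_norms[OF assms, of 1]
      unitary2_column_norms[OF assms, of 0] by linarith+
  have "(U * diag_state p * adj2 U) $$ (0, 0) = complex_of_real (?x * p + (1 - ?x) * (1 - p))"
    using conj_diag_state_index[OF U, of 0 p] unfolding norms by simp
  moreover have "(U * diag_state p * adj2 U) $$ (1, 1)
      = complex_of_real (1 - (?x * p + (1 - ?x) * (1 - p)))"
    using conj_diag_state_index[OF U, of 1 p] unfolding norms by (simp add: algebra_simps)
  ultimately show "deph_therm \<beta> E lam (U * diag_state p * adj2 U)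
       = diag_state (therm_pop (exp (- \<beta> * E)) lam (?x * p + (1 - ?x) * (1 - p)))"
    by (rule deph_therm_eq_diag_state)
  show "0 \<le> ?x" by simp
  show "?x \<le> 1" using norms(1) by (metis diff_ge_0_iff_ge zero_le_power2)
qed

lemma unitary2_pauliX: "unitary2 pauliX"
  unfolding unitary2_def pauliX_def
  by (auto simp: adj2_def times_mat_def scalar_prod_def sum_2 atLeast0LessThan
      less_2_cases_iff)

lemma pauliX_conj_diag_state: "pauliX * diag_state p * adj2 pauliX = diag_state (1 - p)"
  by (auto intro!: eq_matI simp: pauliX_def adj2_def diag_state_def times_mat_def scalar_prod_def
      sum_2 atLeast0LessThan less_2_cases_iff)

lemma pop0_diag_state [simp]: "pop0 (diag_state p) = p"
  by (simp add: pop0_def diag_state_def)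

lemma proto_state_pauliX:
  "proto_state \<beta> E (\<lambda>_. pauliX) (\<lambda>_. lam) (diag_state p) k
     = diag_state (((\<lambda>q. therm_pop (exp (- \<beta> * E)) lam (1 - q)) ^^ k) p)"
  by (induction k) (simp_all add: pauliX_conj_diag_state deph_therm_diag_state)

lemma proto_state_diag_state:
  assumes "\<And>k. unitary2 (Us k)"
  shows "proto_state \<beta> E Us lams (diag_state p) k
     = diag_state (pop0 (proto_state \<beta> E Us lams (diag_state p) k))"
proof (induction k)
  case (Suc k)
  obtain r where "proto_state \<beta> E Us lams (diag_state p) (Suc k) = diag_state r"
    using deph_therm_unitary_conj_diag_state[OF assms] Suc.IH by (metis proto_state.simps(2))
  then show ?case by simp
qed simp

lemma max_pop_proto_state_Suc:
  fixes p :: real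
  assumes "in_P_eps \<epsilon> Us lams" and "exp (- \<beta> * E) \<le> 1"
    and "1 \<le> (1 - \<epsilon>) * (1 + exp (- \<beta> * E))"
  defines "m \<equiv> \<lambda>k. max_pop (pop0 (proto_state \<beta> E Us lams (diag_state p) k))"
  shows "m (Suc k) \<le> max (m k) (therm_pop (exp (- \<beta> * E)) (1 - \<epsilon>) (1 - m k))"
proof -
  let ?q = "pop0 (proto_state \<beta> E Us lams (diag_state p) k)"
  have U: "unitary2 (Us k)" "\<And>k. unitary2 (Us k)" and lam: "0 \<le> lams k" "lams k \<le> 1 - \<epsilon>"
    using assms(1) unfolding in_P_eps_def by auto
  obtain x where x: "0 \<le> x" "x \<le> 1" and
    "deph_therm \<beta> E (lams k) (Us k * diag_state ?q * adj2 (Us k))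
       = diag_state (therm_pop (exp (- \<beta> * E)) (lams k) (x * ?q + (1 - x) * (1 - ?q)))"
    by (rule deph_therm_unitary_conj_diag_state[OF U(1)])
  moreover have "proto_state \<beta> E Us lams (diag_state p) (Suc k)
      = deph_therm \<beta> E (lams k) (Us k * diag_state ?q * adj2 (Us k))"
    unfolding proto_state.simps(2) by (subst proto_state_diag_state[OF U(2)]) (rule refl)
  ultimately have "m (Suc k) = max_pop (therm_pop (exp (- \<beta> * E)) (lams k) (x * ?q + (1 - x) * (1 - ?q)))"
    unfolding m_def by simp
  also have "\<dots> \<le> max (m k) (therm_pop (exp (- \<beta> * E)) (1 - \<epsilon>) (1 - m k))"
    using lam assms(2,3) max_pop_mix_le[OF x] unfolding m_def by (rule max_pop_therm_pop_le)
  finally show ?thesis .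
qed

lemma pop0_proto_state_le_max_orbit:
  assumes "in_P_eps \<epsilon> Us lams" and "exp (- \<beta> * E) \<le> 1"
    and "1 \<le> (1 - \<epsilon>) * (1 + exp (- \<beta> * E))" and "1/2 \<le> p0"
  shows "pop0 (proto_state \<beta> E Us lams (diag_state p0) k)
    \<le> max p0 (((\<lambda>q. therm_pop (exp (- \<beta> * E)) (1 - \<epsilon>) (1 - q)) ^^ k) p0)"
proof -
  let ?f = "\<lambda>q. therm_pop (exp (- \<beta> * E)) (1 - \<epsilon>) (1 - q)"
  have "mono ?f"
  proof (rule monoI)
    fix x y :: real
    assume "x \<le> y"
    with assms(3) have "((1 - \<epsilon>) * (1 + exp (- \<beta> * E)) - 1) * x
      \<le> ((1 - \<epsilon>) * (1 + exp (- \<beta> * E)) - 1) * y" by (intro mult_left_mono) auto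
    then show "?f x \<le> ?f y" by (simp add: therm_pop_def algebra_simps)
  qed
  then have "max_pop (pop0 (proto_state \<beta> E Us lams (diag_state p0) k)) \<le> max p0 ((?f ^^ k) p0)"
  proof (rule le_max_orbit)
    show "max_pop (pop0 (proto_state \<beta> E Us lams (diag_state p0) 0)) \<le> p0"
      using assms(4) by (simp add: max_pop_def)
  qed (rule max_pop_proto_state_Suc[OF assms(1-3)])
  then show ?thesis unfolding max_pop_def by linarith
qed

theorem theorem3:
  fixes E \<beta> \<epsilon> p0 :: real
  assumes "E > 0" and "\<beta> > 0"
    and "1/2 \<le> p0" and "p0 \<le> 1"
    and "0 \<le> \<epsilon>" and "\<epsilon> \<le> 1 / (1 + exp (\<beta> * E) + exp (2 * \<beta> * E))"
  defines "Z \<equiv> 1 + exp (- \<beta> * E)"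
  defines "pX \<equiv> (\<lambda>k. pop0 (proto_state \<beta> E (\<lambda>_. pauliX) (\<lambda>_. 1 - \<epsilon>) (diag_state p0) k))"
  shows "in_P_eps \<epsilon> (\<lambda>_. pauliX) (\<lambda>_. 1 - \<epsilon>)
    \<and> (\<forall>Us lams. in_P_eps \<epsilon> Us lams \<longrightarrow>
          (\<forall>k. pop0 (proto_state \<beta> E Us lams (diag_state p0) k) \<le> max p0 (pX k)))
    \<and> (\<forall>k. pX k = 1 - \<epsilon> / (2 - (1 - \<epsilon>) * Z)
                 - ((1 - \<epsilon>) * Z - 1) ^ k * (1 - \<epsilon> / (2 - (1 - \<epsilon>) * Z) - p0))
    \<and> pX \<longlonglongrightarrow> 1 - \<epsilon> / (2 - (1 - \<epsilon>) * Z)"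
proof -
  define w where "w = exp (- \<beta> * E)"
  define f where "f = (\<lambda>q. therm_pop w (1 - \<epsilon>) (1 - q))"
  define r where "r = (1 - \<epsilon>) * Z - 1"
  define ps where "ps = 1 - \<epsilon> / (2 - (1 - \<epsilon>) * Z)"
  have Z: "Z = 1 + w" by (simp add: Z_def w_def)
  have "0 < \<beta> * E" using assms(1,2) by simp
  from small_noise_slope_bounds[OF this assms(5)] assms(6)
  have \<epsilon>: "\<epsilon> < 1" and r: "0 \<le> r" "r < 1"
    by (simp_all add: r_def Z w_def mult.assoc)
  have f: "f = (\<lambda>q. (1 - r) * ps + r * q)"
    using r therm_pop_flip_eq_affine by (simp add: f_def ps_def r_def Z)
  have pX: "pX k = (f ^^ k) p0" for k
    by (simp add: pX_def f_def w_def proto_state_pauliX)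
  have closed: "pX k = ps - r ^ k * (ps - p0)" for k
    unfolding pX f by (rule funpow_affine)
  have w: "exp (- \<beta> * E) \<le> 1" "1 \<le> (1 - \<epsilon>) * (1 + exp (- \<beta> * E))"
    using \<open>0 < \<beta> * E\<close> r(1) by (simp_all add: r_def Z w_def)
  have "pop0 (proto_state \<beta> E Us lams (diag_state p0) k) \<le> max p0 (pX k)"
    if "in_P_eps \<epsilon> Us lams" for Us lams k
    using pop0_proto_state_le_max_orbit[OF that w assms(3)] by (simp add: pX f_def w_def)
  moreover have "in_P_eps \<epsilon> (\<lambda>_. pauliX) (\<lambda>_. 1 - \<epsilon>)"
    using \<epsilon> by (simp add: in_P_eps_def unitary2_pauliX)
  moreover have "pX \<longlonglongrightarrow> ps"
    unfolding closed using r by (auto intro!: tendsto_eq_intros LIMSEQ_power_zero)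
  ultimately show ?thesis
    using closed unfolding ps_def r_def by blast
qed

end
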